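(* For all $n,k\in\mathbb{N}$ with $k\ge1$ and $n\ge k+2$, setting $x_k:=\big(1-\frac{k^2}{n^2}\big)^{1/2}$, we have $$\tau_{n,k}<\delta_{n,k}:=\frac{D_{n,k}(x_k)}{T_n^{(k)}(1)}.$$
   Context: $T_n$ denotes the Chebyshev polynomial of the first kind of degree $n$, $T_n(\cos\theta)=\cos n\theta$. For integers $n\ge k+2$, $k\ge 1$, let $\omega_{n,k}$ be the rightmost (largest) zero of $T_n^{(k+1)}$ and define $\tau_{n,k}:=|T_n^{(k)}(\omega_{n,k})|/T_n^{(k)}(1)$. Let $S_n(x):=\frac1n\sqrt{1-x^2}\,T_n'(x)$ and define the Duffin–Schaeffer majorant $D_{n,k}(x):=\big([T_n^{(k)}(x)]^2+[S_n^{(k)}(x)]^2\big)^{1/2}$ for $x\in(-1,1)$. *)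

theory Defs
  imports "HOL-Analysis.Analysis" "HOL-Computational_Algebra.Polynomial"
begin

text \<open>Chebyshev polynomials of the first kind, T_0 = 1, T_1 = x,
  T_(n+2) = 2 x T_(n+1) - T_n (so that T_n(cos t) = cos(n t)).\<close>
fun cheb_T :: "nat \<Rightarrow> real poly" where
  "cheb_T 0 = 1"
| "cheb_T (Suc 0) = [:0, 1:]"
| "cheb_T (Suc (Suc n)) = smult 2 ([:0, 1:] * cheb_T (Suc n)) - cheb_T n"

definition cheb_T_deriv :: "nat \<Rightarrow> nat \<Rightarrow> real poly" where
  "cheb_T_deriv n k = (pderiv ^^ k) (cheb_T n)"

definition cheb_omega :: "nat \<Rightarrow> nat \<Rightarrow> real" where
  "cheb_omega n k = Max {x. poly (cheb_T_deriv n (Suc k)) x = 0}"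

definition cheb_tau :: "nat \<Rightarrow> nat \<Rightarrow> real" where
  "cheb_tau n k = \<bar>poly (cheb_T_deriv n k) (cheb_omega n k)\<bar> / poly (cheb_T_deriv n k) 1"

definition cheb_S :: "nat \<Rightarrow> real \<Rightarrow> real" where
  "cheb_S n x = (1 / real n) * sqrt (1 - x\<^sup>2) * poly (pderiv (cheb_T n)) x"

text \<open>Duffin--Schaeffer majorant D_{n,k}(x), for x in (-1,1); the k-th derivative of S_n
  is the iterated real derivative (well defined on the open interval (-1,1)).\<close>
definition DS_majorant :: "nat \<Rightarrow> nat \<Rightarrow> real \<Rightarrow> real" where
  "DS_majorant n k x = sqrt ((poly (cheb_T_deriv n k) x)\<^sup>2 + ((deriv ^^ k) (cheb_S n) x)\<^sup>2)"

end

theory Submission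
  imports Defs
begin

text \<open>Write \<open>u = T_n^(k)\<close> and \<open>v = T_n^(k+1)\<close>; differentiating the Chebyshev equation gives
  \<open>(1 - x^2) u'' - (2k+1) x u' + (n^2 - k^2) u = 0\<close>. Two monotone quantities drive the proof.
  First, \<open>(1 - x^2)^(k/2) (k x v - (n^2 - k^2) u)\<close> increases wherever \<open>v > 0\<close> and
  \<open>n^2 (1 - x^2) < k (k+1)\<close>, and it vanishes at \<open>1\<close>; as \<open>u(omega) \<le> 0\<close>, this forces
  \<open>omega < x_k\<close> and \<open>u(x_k) > 0\<close>. Second, the Sonin-type function
  \<open>E = (1 - x^2)^k (u^2 + W^2 / Q)\<close> with \<open>W = k x u - (1 - x^2) v\<close> and
  \<open>Q = n^2 (1 - x^2) - k (k-1)\<close> has derivative \<open>2k(k-1) x (1 - x^2)^(k-1) W^2 / Q^2\<close>, so it is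
  non-decreasing on \<open>[0, x_k]\<close>. At \<open>omega\<close> it equals \<open>C(1 - omega^2) u(omega)^2\<close> and at \<open>x_k\<close>
  it is below \<open>C(1 - x_k^2) u(x_k)^2\<close>, where the weight
  \<open>C(P) = P^k (1 + k^2 (1 - P) / (n^2 P - k (k-1)))\<close> satisfies \<open>C(1 - x_k^2) \<le> C(P)\<close> on
  \<open>[1 - x_k^2, 1]\<close> by Bernoulli's inequality. Hence \<open>|u(omega)| < u(x_k) \<le> D_(n,k)(x_k)\<close>.\<close>

abbreviation dT :: "nat \<Rightarrow> nat \<Rightarrow> real \<Rightarrow> real" where
  "dT n j x \<equiv> poly (cheb_T_deriv n j) x"

lemma cheb_T_deriv_0 [simp]: "cheb_T_deriv n 0 = cheb_T n"
  by (simp add: cheb_T_deriv_def)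

lemma cheb_T_deriv_Suc: "cheb_T_deriv n (Suc j) = pderiv (cheb_T_deriv n j)"
  by (simp add: cheb_T_deriv_def)

lemma poly_cheb_T_Suc_Suc:
  "poly (cheb_T (Suc (Suc n))) x = 2 * x * poly (cheb_T (Suc n)) x - poly (cheb_T n) x"
  "poly (pderiv (cheb_T (Suc (Suc n)))) x
     = 2 * poly (cheb_T (Suc n)) x + 2 * x * poly (pderiv (cheb_T (Suc n))) x
       - poly (pderiv (cheb_T n)) x"
  "poly (pderiv (pderiv (cheb_T (Suc (Suc n))))) x
     = 4 * poly (pderiv (cheb_T (Suc n))) x + 2 * x * poly (pderiv (pderiv (cheb_T (Suc n)))) x
       - poly (pderiv (pderiv (cheb_T n))) x"
  by (simp_all add: pderiv_mult pderiv_smult pderiv_diff pderiv_add pderiv_pCons algebra_simps)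

lemma cheb_T_one: "poly (cheb_T n) 1 = 1"
  by (induction n rule: cheb_T.induct) simp_all

lemma cheb_T_minus: "poly (cheb_T n) (- x) = (- 1) ^ n * poly (cheb_T n) x"
  by (induction n rule: cheb_T.induct) (simp_all add: algebra_simps)

lemma degree_cheb_T_le: "degree (cheb_T n) \<le> n"
proof (induction n rule: cheb_T.induct)
  case (3 n)
  have "degree (smult 2 ([:0, 1:] * cheb_T (Suc n))) \<le> Suc (Suc n)"
    using 3 by (simp add: degree_mult_le[THEN order_trans])
  with 3 show ?case by (auto intro: degree_diff_le)
qed simp_all

lemma cheb_T_first_order:
  "(1 - x\<^sup>2) * poly (pderiv (cheb_T (Suc n))) x
     = real (Suc n) * (poly (cheb_T n) x - x * poly (cheb_T (Suc n)) x)"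
proof (induction n rule: cheb_T.induct)
  case (3 n)
  show ?case
    using 3 poly_cheb_T_Suc_Suc(1)[of n x] poly_cheb_T_Suc_Suc(1,2)[of "Suc n" x]
    by (simp del: cheb_T.simps) algebra
qed (simp_all add: pderiv_pCons pderiv_mult pderiv_smult pderiv_diff algebra_simps power2_eq_square)

lemma cheb_T_ode:
  "(1 - x\<^sup>2) * poly (pderiv (pderiv (cheb_T n))) x - x * poly (pderiv (cheb_T n)) x
     + (real n)\<^sup>2 * poly (cheb_T n) x = 0"
proof (induction n rule: cheb_T.induct)
  case (3 n)
  show ?case
    using 3 cheb_T_first_order[of x n] poly_cheb_T_Suc_Suc[of n x]
    by (simp del: cheb_T.simps) algebra
qed (simp_all add: pderiv_pCons)

lemma cheb_T_deriv_ode: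
  "(1 - x\<^sup>2) * dT n (Suc (Suc j)) x - (2 * real j + 1) * x * dT n (Suc j) x
     + ((real n)\<^sup>2 - (real j)\<^sup>2) * dT n j x = 0"
proof (induction j arbitrary: x)
  case 0
  show ?case using cheb_T_ode[of x n] by (simp add: cheb_T_deriv_Suc)
next
  case (Suc j)
  define L where "L = [:1, 0, -1:] * cheb_T_deriv n (Suc (Suc j))
    - smult (2 * real j + 1) ([:0, 1:] * cheb_T_deriv n (Suc j))
    + smult ((real n)\<^sup>2 - (real j)\<^sup>2) (cheb_T_deriv n j)"
  have "L = 0"
    by (rule poly_ext) (use Suc.IH in \<open>simp add: L_def algebra_simps power2_eq_square\<close>)
  then have "poly (pderiv L) x = 0"
    by simp
  then show ?case
    by (simp add: L_def pderiv_mult pderiv_smult pderiv_diff pderiv_add pderiv_minus pderiv_pCons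
        cheb_T_deriv_Suc[symmetric] algebra_simps power2_eq_square)
qed

lemma cheb_T_deriv_pcompose_minus:
  "cheb_T_deriv n j \<circ>\<^sub>p [:0, -1:] = smult ((- 1) ^ (n + j)) (cheb_T_deriv n j)"
proof (induction j)
  case 0
  show ?case by (rule poly_ext) (simp add: poly_pcompose cheb_T_minus)
next
  case (Suc j)
  have "pderiv (cheb_T_deriv n j \<circ>\<^sub>p [:0, -1:]) = smult ((- 1) ^ (n + j)) (cheb_T_deriv n (Suc j))"
    by (simp add: Suc.IH pderiv_smult cheb_T_deriv_Suc)
  then show ?case
    by (simp add: pderiv_pcompose pderiv_pCons cheb_T_deriv_Suc)
qed

lemma cheb_T_deriv_minus: "dT n j (- x) = (- 1) ^ (n + j) * dT n j x"
  using arg_cong[OF cheb_T_deriv_pcompose_minus, of "\<lambda>p. poly p x" n j]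
  by (simp add: poly_pcompose)

lemma cheb_T_deriv_eq_0: "n < j \<Longrightarrow> cheb_T_deriv n j = 0"
  using degree_cheb_T_le[of n] degree_higher_pderiv[of "j - 1" "cheb_T n"]
  by (cases j) (simp_all add: cheb_T_deriv_def pderiv_eq_0_iff)

lemma has_real_derivative_cheb_T_deriv [derivative_intros]:
  "((\<lambda>x. dT n j x) has_real_derivative dT n (Suc j) x) (at x within S)"
  by (simp add: cheb_T_deriv_Suc has_field_derivative_at_within)

lemma continuous_on_cheb_T_deriv [continuous_intros]: "continuous_on S (\<lambda>x. dT n j x)"
  by (intro continuous_intros)

lemma cheb_T_deriv_one_pos: "j \<le> n \<Longrightarrow> 0 < dT n j 1"
proof (induction j)
  case (Suc j)
  have "(2 * real j + 1) * dT n (Suc j) 1 = ((real n)\<^sup>2 - (real j)\<^sup>2) * dT n j 1"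
    using cheb_T_deriv_ode[of 1 n j] by simp
  moreover have "0 < ((real n)\<^sup>2 - (real j)\<^sup>2) * dT n j 1"
    using Suc by (simp add: power_strict_mono)
  ultimately have "0 < (2 * real j + 1) * dT n (Suc j) 1"
    by simp
  then show ?case
    by (simp add: zero_less_mult_iff)
qed (simp add: cheb_T_one)

lemma cheb_T_deriv_ge_one: "j \<le> n \<Longrightarrow> 1 \<le> x \<Longrightarrow> dT n j 1 \<le> dT n j x"
proof (induction j arbitrary: x rule: inc_induct)
  case base
  show ?case
    by (rule DERIV_nonneg_imp_nondecreasing[OF base])
      (auto intro!: derivative_eq_intros simp: cheb_T_deriv_eq_0)
next
  case (step j)
  show ?case
  proof (rule DERIV_nonneg_imp_nondecreasing[OF step.prems])
    fix t :: real assume "1 \<le> t"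
    then have "0 \<le> dT n (Suc j) t"
      using step.IH[of t] cheb_T_deriv_one_pos[of "Suc j" n] step.hyps by simp
    then show "\<exists>y. ((\<lambda>x. dT n j x) has_real_derivative y) (at t) \<and> 0 \<le> y"
      by (blast intro: derivative_intros)
  qed
qed

lemma cheb_T_deriv_pos_ge_one: "j \<le> n \<Longrightarrow> 1 \<le> x \<Longrightarrow> 0 < dT n j x"
  using cheb_T_deriv_ge_one cheb_T_deriv_one_pos by (meson less_le_trans)

lemma DERIV_second_neg_imp_decreasing_right:
  fixes f f' :: "real \<Rightarrow> real"
  assumes f: "\<And>x. (f has_real_derivative f' x) (at x)"
    and f': "(f' has_real_derivative l) (at a)" and "f' a = 0" "l < 0"
  shows "\<exists>d>0. \<forall>h. 0 < h \<longrightarrow> h < d \<longrightarrow> f (a + h) < f a"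
proof -
  obtain d where "d > 0" and d: "\<And>h. 0 < h \<Longrightarrow> h < d \<Longrightarrow> f' (a + h) < 0"
    using DERIV_neg_dec_right[OF f' \<open>l < 0\<close>] \<open>f' a = 0\<close> by auto
  have "continuous_on S f" for S
    using f by (meson DERIV_isCont continuous_at_imp_continuous_on)
  moreover have "f (a + h) < f a" if h: "0 < h" "h < d" for h
  proof -
    have "\<exists>y. (f has_real_derivative y) (at x) \<and> y < 0" if "a < x" "x < a + h" for x
      using f d[of "x - a"] h that by auto
    then show ?thesis
      using DERIV_neg_imp_decreasing_open[of a "a + h" f] \<open>continuous_on {a..a + h} f\<close> h by simp
  qed
  with \<open>d > 0\<close> show ?thesis by blast
qed

lemma cheb_T_deriv_critical_not_min:
  assumes "j < n" and x0: "0 \<le> x0" "x0 < 1" and crit: "dT n (Suc j) x0 = 0" and pos: "0 < dT n j x0"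
  shows "\<exists>y\<in>{x0<..<1}. dT n j y < dT n j x0"
proof -
  have "x0\<^sup>2 < 1"
    using x0 by (simp add: abs_square_less_1)
  moreover have "0 < ((real n)\<^sup>2 - (real j)\<^sup>2) * dT n j x0"
    using assms by (simp add: power_strict_mono)
  ultimately have "(1 - x0\<^sup>2) * dT n (Suc (Suc j)) x0 < 0"
    using cheb_T_deriv_ode[of x0 n j] crit by simp
  with \<open>x0\<^sup>2 < 1\<close> have "dT n (Suc (Suc j)) x0 < 0"
    by (simp add: mult_less_0_iff)
  then obtain d where "d > 0" and d: "\<And>h. 0 < h \<Longrightarrow> h < d \<Longrightarrow> dT n j (x0 + h) < dT n j x0"
    using DERIV_second_neg_imp_decreasing_right[OF has_real_derivative_cheb_T_deriv
        has_real_derivative_cheb_T_deriv crit] by blast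
  define h where "h = min (d / 2) ((1 - x0) / 2)"
  have "0 < h" "h < d" "x0 + h \<in> {x0<..<1}"
    using \<open>d > 0\<close> x0 by (auto simp: h_def min_def field_simps)
  with d show ?thesis by blast
qed

lemma cheb_T_deriv_not_min_at_one:
  assumes "j < n"
  shows "\<exists>y\<in>{0..<1}. dT n j y < dT n j 1"
proof -
  obtain d where "d > 0" and d: "\<And>h. 0 < h \<Longrightarrow> h < d \<Longrightarrow> dT n j (1 - h) < dT n j 1"
    using DERIV_pos_inc_left[OF has_real_derivative_cheb_T_deriv cheb_T_deriv_one_pos[of "Suc j" n]]
      assms by auto
  define h where "h = min (d / 2) 1"
  have "0 < h" "h < d" "h \<le> 1"
    using \<open>d > 0\<close> by (auto simp: h_def)
  with d[of h] show ?thesis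
    by (intro bexI[of _ "1 - h"]) auto
qed

text \<open>Were there no real zero, \<open>T_n^(j)\<close> would be positive and, by parity, even; its minimum on
  \<open>[0, 1]\<close> would be a critical point at which the differentiated Chebyshev equation forces
  a strict local maximum.\<close>

lemma cheb_T_deriv_has_root:
  assumes "j < n"
  shows "\<exists>x. dT n j x = 0"
proof (rule ccontr)
  assume "\<nexists>x. dT n j x = 0"
  then have nz: "dT n j x \<noteq> 0" for x by blast
  have pos: "0 < dT n j x" if "x \<le> 1" for x
  proof (rule ccontr)
    assume "\<not> 0 < dT n j x"
    then have "\<exists>z\<ge>x. z \<le> 1 \<and> dT n j z = 0"
      using cheb_T_deriv_one_pos[of j n] assms that
      by (intro IVT') (auto intro: continuous_intros)
    with nz show False by blast
  qed
  have "even (n + j)"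
  proof (rule ccontr)
    assume "odd (n + j)"
    then have "dT n j 0 = - dT n j 0"
      using cheb_T_deriv_minus[of n j 0] by simp
    with nz show False by simp
  qed
  then have crit0: "dT n (Suc j) 0 = 0"
    using cheb_T_deriv_minus[of n "Suc j" 0] by simp
  obtain x0 where x0: "x0 \<in> {0..1}" and min: "\<And>y. y \<in> {0..1} \<Longrightarrow> dT n j x0 \<le> dT n j y"
    using continuous_attains_inf[of "{0..1::real}" "\<lambda>x. dT n j x"] continuous_on_cheb_T_deriv by auto
  have "x0 \<noteq> 1"
  proof
    assume "x0 = 1"
    obtain y where "y \<in> {0..<1}" "dT n j y < dT n j 1"
      using cheb_T_deriv_not_min_at_one[OF assms] by blast
    with min[of y] \<open>x0 = 1\<close> show False by simp
  qed
  with x0 have "0 \<le> x0" "x0 < 1" by auto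
  have "dT n (Suc j) x0 = 0"
  proof (cases "x0 = 0")
    case False
    show ?thesis
    proof (rule DERIV_local_min[OF has_real_derivative_cheb_T_deriv])
      show "0 < min x0 (1 - x0)" using False \<open>0 \<le> x0\<close> \<open>x0 < 1\<close> by simp
      show "\<forall>y. \<bar>x0 - y\<bar> < min x0 (1 - x0) \<longrightarrow> dT n j x0 \<le> dT n j y"
        using min by (auto simp: abs_if split: if_splits)
    qed
  qed (use crit0 in simp)
  then obtain y where "y \<in> {x0<..<1}" "dT n j y < dT n j x0"
    using cheb_T_deriv_critical_not_min[OF assms \<open>0 \<le> x0\<close> \<open>x0 < 1\<close>] pos[of x0] \<open>x0 < 1\<close> by auto
  with min[of y] \<open>0 \<le> x0\<close> show False by simp
qed

lemma DERIV_sqrt_one_minus_sq_power: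
  fixes z :: real
  assumes "\<bar>z\<bar> < 1"
  shows "((\<lambda>x. sqrt (1 - x\<^sup>2) ^ m) has_real_derivative
            - real m * z * sqrt (1 - z\<^sup>2) ^ m / (1 - z\<^sup>2)) (at z)"
proof -
  have p: "0 < 1 - z\<^sup>2"
    using assms by (simp add: abs_square_less_1)
  define s where "s = sqrt (1 - z\<^sup>2)"
  have s: "0 < s" "s * s = 1 - z\<^sup>2"
    using p by (auto simp: s_def)
  have "((\<lambda>x. sqrt (1 - x\<^sup>2)) has_real_derivative - z / s) (at z)"
    unfolding s_def
    by (rule derivative_eq_intros refl | use p in \<open>simp add: field_simps power2_eq_square\<close>)+
  from DERIV_power[OF this, of m]
  have "((\<lambda>x. sqrt (1 - x\<^sup>2) ^ m) has_real_derivative real m * (- z / s) * s ^ (m - 1)) (at z)"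
    by (simp add: s_def mult.assoc)
  moreover have "real m * (- z / s) * s ^ (m - 1) = - real m * z * s ^ m / (1 - z\<^sup>2)"
    using s by (cases m) (simp_all add: field_simps flip: s(2))
  ultimately show ?thesis
    by (simp add: s_def)
qed

lemma cheb_T_deriv_comb_identity:
  "(1 - x\<^sup>2) * (real k * dT n (Suc k) x + real k * x * dT n (Suc (Suc k)) x
        - ((real n)\<^sup>2 - (real k)\<^sup>2) * dT n (Suc k) x)
     - real k * x * (real k * x * dT n (Suc k) x - ((real n)\<^sup>2 - (real k)\<^sup>2) * dT n k x)
   = dT n (Suc k) x * (real k * (real k + 1) - (real n)\<^sup>2 * (1 - x\<^sup>2))"
  using cheb_T_deriv_ode[of x n k] by algebra

lemma cheb_T_deriv_comb_neg:
  assumes "1 \<le> k" and a: "0 \<le> a" "a < 1"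
    and hyp: "\<And>x. a < x \<Longrightarrow> x < 1 \<Longrightarrow>
      0 < dT n (Suc k) x \<and> (real n)\<^sup>2 * (1 - x\<^sup>2) < real k * (real k + 1)"
  shows "real k * a * dT n (Suc k) a < ((real n)\<^sup>2 - (real k)\<^sup>2) * dT n k a"
proof -
  define lam where "lam = (real n)\<^sup>2 - (real k)\<^sup>2"
  define g where "g x = real k * x * dT n (Suc k) x - lam * dT n k x" for x
  define g' where
    "g' x = real k * dT n (Suc k) x + real k * x * dT n (Suc (Suc k)) x - lam * dT n (Suc k) x" for x
  define M where "M x = sqrt (1 - x\<^sup>2) ^ k * g x" for x
  have "M a < M 1"
  proof (rule DERIV_pos_imp_increasing_open[OF \<open>a < 1\<close>])
    fix z assume z: "a < z" "z < 1"
    then have "\<bar>z\<bar> < 1" "0 < 1 - z\<^sup>2"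
      using a by (auto simp: abs_square_less_1)
    have "(g has_real_derivative g' z) (at z)"
      unfolding g_def g'_def by (auto intro!: derivative_eq_intros)
    from DERIV_mult[OF DERIV_sqrt_one_minus_sq_power[OF \<open>\<bar>z\<bar> < 1\<close>] this]
    have "(M has_real_derivative
        sqrt (1 - z\<^sup>2) ^ k / (1 - z\<^sup>2) * ((1 - z\<^sup>2) * g' z - real k * z * g z)) (at z)"
      unfolding M_def using \<open>0 < 1 - z\<^sup>2\<close>
      by (simp add: field_simps)
    moreover have "(1 - z\<^sup>2) * g' z - real k * z * g z
        = dT n (Suc k) z * (real k * (real k + 1) - (real n)\<^sup>2 * (1 - z\<^sup>2))"
      using cheb_T_deriv_comb_identity[of z k n] by (simp add: g_def g'_def lam_def)
    moreover have "0 < dT n (Suc k) z * (real k * (real k + 1) - (real n)\<^sup>2 * (1 - z\<^sup>2))"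
      using hyp[OF z] by simp
    ultimately show "\<exists>y. (M has_real_derivative y) (at z) \<and> 0 < y"
      using \<open>0 < 1 - z\<^sup>2\<close> by auto
  qed (auto simp: M_def g_def intro!: continuous_intros)
  moreover have "M 1 = 0"
    using \<open>1 \<le> k\<close> by (simp add: M_def)
  ultimately have "sqrt (1 - a\<^sup>2) ^ k * g a < 0"
    unfolding M_def by linarith
  moreover have "0 < sqrt (1 - a\<^sup>2) ^ k"
    using a by (simp add: abs_square_less_1)
  ultimately have "g a < 0"
    by (metis less_eq_real_def mult_nonneg_nonneg not_le)
  then show ?thesis
    by (simp add: g_def lam_def)
qed

definition cheb_W :: "nat \<Rightarrow> nat \<Rightarrow> real \<Rightarrow> real" where
  "cheb_W n k x = real k * x * dT n k x - (1 - x\<^sup>2) * dT n (Suc k) x"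

definition cheb_Q :: "nat \<Rightarrow> nat \<Rightarrow> real \<Rightarrow> real" where
  "cheb_Q n k x = (real n)\<^sup>2 * (1 - x\<^sup>2) - real k * (real k - 1)"

definition cheb_E :: "nat \<Rightarrow> nat \<Rightarrow> real \<Rightarrow> real" where
  "cheb_E n k x = (1 - x\<^sup>2) ^ k * ((dT n k x)\<^sup>2 + (cheb_W n k x)\<^sup>2 / cheb_Q n k x)"

lemma cheb_E_deriv_identity:
  fixes x u v q P Q lam nn kk W W' :: real
  assumes P: "P = 1 - x\<^sup>2" and Q: "Q = nn * P - kk * (kk - 1)" "Q \<noteq> 0"
    and lam: "lam = nn - kk\<^sup>2"
    and W: "W = kk * x * u - P * v" and W': "W' = (kk + lam) * u - (kk - 1) * x * v"
  shows "kk * (- 2 * x) * q * (u\<^sup>2 + W\<^sup>2 / Q)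
      + (P * q) * (2 * u * v + (2 * W * W' * Q - W\<^sup>2 * (nn * (- 2 * x))) / Q\<^sup>2)
    = 2 * kk * (kk - 1) * x * q * W\<^sup>2 / Q\<^sup>2"
proof -
  let ?Z = "kk * (- x) * u\<^sup>2 * Q\<^sup>2 - kk * x * W\<^sup>2 * Q + P * u * v * Q\<^sup>2 + P * W * W' * Q
      + nn * x * P * W\<^sup>2 - kk * (kk - 1) * x * W\<^sup>2"
  have "kk * (- 2 * x) * q * (u\<^sup>2 + W\<^sup>2 / Q)
      + (P * q) * (2 * u * v + (2 * W * W' * Q - W\<^sup>2 * (nn * (- 2 * x))) / Q\<^sup>2)
      - 2 * kk * (kk - 1) * x * q * W\<^sup>2 / Q\<^sup>2 = 2 * q * ?Z / Q\<^sup>2"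
    using \<open>Q \<noteq> 0\<close> by (simp add: field_simps power2_eq_square)
  moreover have "?Z = 0"
    unfolding W W' lam Q P by algebra
  ultimately show ?thesis
    by simp
qed

lemma cheb_E_has_derivative:
  assumes "1 \<le> k" and Q: "cheb_Q n k t \<noteq> 0"
  shows "(cheb_E n k has_real_derivative
     2 * real k * (real k - 1) * t * (1 - t\<^sup>2) ^ (k - 1) * (cheb_W n k t)\<^sup>2 / (cheb_Q n k t)\<^sup>2) (at t)"
proof -
  define u where "u = dT n k t"
  define v where "v = dT n (Suc k) t"
  define P where "P = 1 - t\<^sup>2"
  define q where "q = P ^ (k - 1)"
  define W where "W = cheb_W n k t"
  define D where "D = cheb_Q n k t"
  define nn where "nn = (real n)\<^sup>2"
  define lam where "lam = (real n)\<^sup>2 - (real k)\<^sup>2"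
  define W' where "W' = (real k + lam) * u - (real k - 1) * t * v"
  have "P ^ k = P * q"
    using \<open>1 \<le> k\<close> by (simp add: q_def power_eq_if)
  have ode: "P * dT n (Suc (Suc k)) t = (2 * real k + 1) * t * v - lam * u"
    using cheb_T_deriv_ode[of t n k] by (simp add: P_def v_def u_def lam_def)
  have "(cheb_W n k has_real_derivative W') (at t)"
  proof -
    have "(cheb_W n k has_real_derivative
        real k * u + real k * t * v - ((- 2 * t) * v + P * dT n (Suc (Suc k)) t)) (at t)"
      unfolding cheb_W_def[abs_def] u_def v_def P_def
      by (auto intro!: derivative_eq_intros simp: algebra_simps)
    then show ?thesis
      by (simp add: ode W'_def algebra_simps)
  qed
  moreover have "(cheb_Q n k has_real_derivative nn * (- 2 * t)) (at t)"
    unfolding cheb_Q_def[abs_def] nn_def by (auto intro!: derivative_eq_intros simp: algebra_simps)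
  ultimately have dWQ: "((\<lambda>x. (cheb_W n k x)\<^sup>2 / cheb_Q n k x) has_real_derivative
      (2 * W * W' * D - W\<^sup>2 * (nn * (- 2 * t))) / D\<^sup>2) (at t)"
    using Q by (auto intro!: derivative_eq_intros simp: W_def D_def power2_eq_square)
  have "((\<lambda>x. (1 - x\<^sup>2) ^ k) has_real_derivative real k * (- 2 * t) * q) (at t)"
    unfolding q_def P_def by (auto intro!: derivative_eq_intros simp: algebra_simps)
  moreover have "((\<lambda>x. (dT n k x)\<^sup>2) has_real_derivative 2 * u * v) (at t)"
    unfolding u_def v_def by (auto intro!: derivative_eq_intros simp: algebra_simps)
  ultimately have "(cheb_E n k has_real_derivative
      real k * (- 2 * t) * q * ((dT n k t)\<^sup>2 + (cheb_W n k t)\<^sup>2 / cheb_Q n k t)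
      + (2 * u * v + (2 * W * W' * D - W\<^sup>2 * (nn * (- 2 * t))) / D\<^sup>2) * (1 - t\<^sup>2) ^ k) (at t)"
    unfolding cheb_E_def[abs_def] by (rule DERIV_mult[OF _ DERIV_add[OF _ dWQ]])
  then have "(cheb_E n k has_real_derivative real k * (- 2 * t) * q * (u\<^sup>2 + W\<^sup>2 / D)
      + (P * q) * (2 * u * v + (2 * W * W' * D - W\<^sup>2 * (nn * (- 2 * t))) / D\<^sup>2)) (at t)"
    unfolding u_def[symmetric] W_def[symmetric] D_def[symmetric] P_def[symmetric] \<open>P ^ k = P * q\<close>
    by (simp add: mult.commute)
  moreover have "real k * (- 2 * t) * q * (u\<^sup>2 + W\<^sup>2 / D)
      + (P * q) * (2 * u * v + (2 * W * W' * D - W\<^sup>2 * (nn * (- 2 * t))) / D\<^sup>2)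
      = 2 * real k * (real k - 1) * t * q * W\<^sup>2 / D\<^sup>2"
    by (rule cheb_E_deriv_identity[where lam = lam])
      (use Q in \<open>simp_all add: P_def D_def cheb_Q_def nn_def lam_def W_def W'_def cheb_W_def u_def v_def\<close>)
  ultimately show ?thesis
    by (simp add: q_def P_def W_def D_def)
qed

lemma cheb_E_mono:
  assumes "1 \<le> k" "0 \<le> a" "a \<le> b" and Q: "\<And>t. a \<le> t \<Longrightarrow> t \<le> b \<Longrightarrow> 0 < cheb_Q n k t"
  shows "cheb_E n k a \<le> cheb_E n k b"
proof (rule DERIV_nonneg_imp_nondecreasing[OF \<open>a \<le> b\<close>])
  fix t assume t: "a \<le> t" "t \<le> b"
  have "0 \<le> real k * (real k - 1)"
    using \<open>1 \<le> k\<close> by simp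
  with Q[OF t] have "0 < (real n)\<^sup>2 * (1 - t\<^sup>2)"
    by (simp add: cheb_Q_def)
  then have "0 \<le> 1 - t\<^sup>2"
    by (simp add: zero_less_mult_iff)
  then have "0 \<le> 2 * real k * (real k - 1) * t * (1 - t\<^sup>2) ^ (k - 1) * (cheb_W n k t)\<^sup>2 / (cheb_Q n k t)\<^sup>2"
    using \<open>1 \<le> k\<close> \<open>0 \<le> a\<close> t by simp
  moreover have "cheb_Q n k t \<noteq> 0"
    using Q[OF t] by simp
  ultimately show "\<exists>y. (cheb_E n k has_real_derivative y) (at t) \<and> 0 \<le> y"
    using cheb_E_has_derivative[OF \<open>1 \<le> k\<close>] by blast
qed

definition cheb_weight :: "nat \<Rightarrow> nat \<Rightarrow> real \<Rightarrow> real" where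
  "cheb_weight n k P = P ^ k * (1 + (real k)\<^sup>2 * (1 - P) / ((real n)\<^sup>2 * P - real k * (real k - 1)))"

lemma cheb_E_eq:
  "cheb_E n k x = cheb_weight n k (1 - x\<^sup>2) * (dT n k x)\<^sup>2
     + (1 - x\<^sup>2) ^ k * ((cheb_W n k x)\<^sup>2 - (real k * x * dT n k x)\<^sup>2) / cheb_Q n k x"
  by (simp add: cheb_E_def cheb_weight_def cheb_Q_def power_mult_distrib add_divide_distrib
      diff_divide_distrib algebra_simps)

lemma cheb_weight_pos:
  assumes "1 \<le> k" "k < n" and P: "(real k)\<^sup>2 / (real n)\<^sup>2 \<le> P" "P \<le> 1"
  shows "0 < cheb_weight n k P"
proof -
  have "0 < real n"
    using assms by simp
  have "0 < (real k)\<^sup>2 / (real n)\<^sup>2"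
    using assms(1,2) by simp
  with P(1) have "0 < P"
    by linarith
  have "(real k)\<^sup>2 \<le> (real n)\<^sup>2 * P"
    using P(1) \<open>0 < real n\<close> by (simp add: field_simps)
  then have "0 < (real n)\<^sup>2 * P - real k * (real k - 1)"
    using assms(1) by (simp add: power2_eq_square algebra_simps)
  moreover have "0 \<le> (real k)\<^sup>2 * (1 - P)"
    using P by simp
  ultimately show ?thesis
    using \<open>0 < P\<close> by (simp add: cheb_weight_def add_pos_nonneg)
qed

lemma cheb_weight_mono:
  assumes "1 \<le> k" "k < n" and P: "(real k)\<^sup>2 / (real n)\<^sup>2 \<le> P" "P \<le> 1"
  shows "cheb_weight n k ((real k)\<^sup>2 / (real n)\<^sup>2) \<le> cheb_weight n k P"
proof -
  define eps where "eps = (real k)\<^sup>2 / (real n)\<^sup>2"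
  have "0 < eps" "eps < 1"
    using assms by (simp_all add: eps_def power_strict_mono)
  define r where "r = P / eps"
  have "1 \<le> r" and P_eq: "P = eps * r"
    using P \<open>0 < eps\<close> by (simp_all add: r_def flip: eps_def)
  define q where "q = real k * (r - 1)"
  have "0 \<le> q"
    using \<open>1 \<le> r\<close> by (simp add: q_def)
  have "(real n)\<^sup>2 * eps = (real k)\<^sup>2"
    using assms by (simp add: eps_def)
  then have den: "(real n)\<^sup>2 * P - real k * (real k - 1) = real k * (q + 1)"
    by (simp add: P_eq q_def algebra_simps power2_eq_square)
  have "0 < real k"
    using assms by simp
  define B where "B = 1 + real k * (1 - P) / (q + 1)"
  have weight: "cheb_weight n k P = P ^ k * B"
  proof -
    have "(real k)\<^sup>2 * (1 - P) / (real k * (q + 1)) = real k * (1 - P) / (q + 1)"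
      using \<open>0 < real k\<close> by (simp add: power2_eq_square)
    then show ?thesis
      by (simp add: cheb_weight_def den B_def)
  qed
  have "1 \<le> B"
    using P \<open>0 < real k\<close> \<open>0 \<le> q\<close> by (simp add: B_def)
  have "(real n)\<^sup>2 * eps - real k * (real k - 1) = real k"
    using \<open>(real n)\<^sup>2 * eps = (real k)\<^sup>2\<close> by (simp add: power2_eq_square algebra_simps)
  moreover have "(real k)\<^sup>2 * (1 - eps) / real k = real k * (1 - eps)"
    using \<open>0 < real k\<close> by (simp add: power2_eq_square)
  ultimately have "cheb_weight n k eps = eps ^ k * (1 + real k * (1 - eps))"
    by (simp add: cheb_weight_def)
  also have "\<dots> \<le> eps ^ k * ((1 + q) * B)"
  proof -
    have "(1 + q) * B = 1 + real k * r * (1 - eps)"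
      using \<open>0 \<le> q\<close> by (simp add: B_def q_def P_eq field_simps)
    also have "1 + real k * (1 - eps) \<le> \<dots>"
      using \<open>1 \<le> r\<close> \<open>eps < 1\<close> \<open>0 < real k\<close> by (simp add: mult_right_mono)
    finally show ?thesis
      using \<open>0 < eps\<close> by (simp add: mult_left_mono)
  qed
  also have "\<dots> \<le> eps ^ k * (r ^ k * B)"
    using Bernoulli_inequality[of "r - 1" k] \<open>1 \<le> r\<close> \<open>1 \<le> B\<close> \<open>0 < eps\<close>
    by (intro mult_left_mono mult_right_mono) (simp_all add: q_def)
  also have "\<dots> = cheb_weight n k P"
    unfolding weight by (simp add: P_eq power_mult_distrib)
  finally show ?thesis
    by (simp add: eps_def)
qed

definition cheb_xk :: "nat \<Rightarrow> nat \<Rightarrow> real" where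
  "cheb_xk n k = sqrt (1 - (real k)\<^sup>2 / (real n)\<^sup>2)"

context
  fixes n k :: nat
  assumes k_less_n: "Suc k < n"
begin

lemma cheb_sq_diff_pos: "0 < (real n)\<^sup>2 - (real k)\<^sup>2"
  using k_less_n by (simp add: power_strict_mono)

lemma finite_cheb_T_deriv_roots: "finite {x. dT n (Suc k) x = 0}"
  using cheb_T_deriv_one_pos[of "Suc k" n] k_less_n by (intro poly_roots_finite) auto

lemma cheb_omega_root: "dT n (Suc k) (cheb_omega n k) = 0"
  using Max_in[OF finite_cheb_T_deriv_roots] cheb_T_deriv_has_root[OF k_less_n]
  by (auto simp: cheb_omega_def)

lemma cheb_omega_ge: "dT n (Suc k) x = 0 \<Longrightarrow> x \<le> cheb_omega n k"
  using Max_ge[OF finite_cheb_T_deriv_roots] by (simp add: cheb_omega_def)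

lemma cheb_omega_nonneg: "0 \<le> cheb_omega n k"
  using cheb_omega_ge[of "- cheb_omega n k"] cheb_omega_root
    cheb_T_deriv_minus[of n "Suc k" "cheb_omega n k"] by simp

lemma cheb_omega_less_1: "cheb_omega n k < 1"
proof (rule ccontr)
  assume "\<not> cheb_omega n k < 1"
  then have "0 < dT n (Suc k) (cheb_omega n k)"
    using cheb_T_deriv_pos_ge_one[of "Suc k" n] k_less_n by simp
  with cheb_omega_root show False by simp
qed

lemma cheb_T_deriv_pos_gt_omega:
  assumes "cheb_omega n k < x"
  shows "0 < dT n (Suc k) x"
proof (rule ccontr)
  assume nonpos: "\<not> 0 < dT n (Suc k) x"
  have "x < 1"
  proof (rule ccontr)
    assume "\<not> x < 1"
    with nonpos show False
      using cheb_T_deriv_pos_ge_one[of "Suc k" n x] k_less_n by simp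
  qed
  with nonpos obtain z where "x \<le> z" "dT n (Suc k) z = 0"
    using IVT'[of "\<lambda>x. dT n (Suc k) x" x 0 1] cheb_T_deriv_one_pos[of "Suc k" n] k_less_n
      continuous_on_cheb_T_deriv by auto
  with assms cheb_omega_ge[of z] show False by simp
qed

lemma cheb_T_deriv_Suc_Suc_omega_nonneg: "0 \<le> dT n (Suc (Suc k)) (cheb_omega n k)"
proof (rule ccontr)
  assume "\<not> ?thesis"
  then obtain d where "d > 0"
    and d: "\<And>h. 0 < h \<Longrightarrow> h < d \<Longrightarrow> dT n (Suc k) (cheb_omega n k + h) < 0"
    using DERIV_neg_dec_right[OF has_real_derivative_cheb_T_deriv] cheb_omega_root
    by (metis linorder_not_le)
  show False
    using d[of "d / 2"] cheb_T_deriv_pos_gt_omega[of "cheb_omega n k + d / 2"] \<open>d > 0\<close> by simp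
qed

lemma cheb_T_deriv_omega_nonpos: "dT n k (cheb_omega n k) \<le> 0"
proof -
  let ?w = "cheb_omega n k"
  have "?w\<^sup>2 < 1"
    using cheb_omega_nonneg cheb_omega_less_1 by (simp add: abs_square_less_1)
  then have "0 \<le> (1 - ?w\<^sup>2) * dT n (Suc (Suc k)) ?w"
    using cheb_T_deriv_Suc_Suc_omega_nonneg by simp
  then have "((real n)\<^sup>2 - (real k)\<^sup>2) * dT n k ?w \<le> 0"
    using cheb_T_deriv_ode[of ?w n k] cheb_omega_root by simp
  then show ?thesis
    using cheb_sq_diff_pos by (metis mult_le_cancel_left_pos mult_zero_right)
qed

context
  assumes k_ge_1: "1 \<le> k"
begin

lemma cheb_xk:
  "0 < cheb_xk n k" "cheb_xk n k < 1" "1 - (cheb_xk n k)\<^sup>2 = (real k)\<^sup>2 / (real n)\<^sup>2"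
  "(real n)\<^sup>2 * (1 - (cheb_xk n k)\<^sup>2) = (real k)\<^sup>2"
proof -
  have "0 < (real k)\<^sup>2 / (real n)\<^sup>2" "(real k)\<^sup>2 / (real n)\<^sup>2 < 1"
    using k_ge_1 k_less_n by (simp_all add: power_strict_mono)
  then show "0 < cheb_xk n k" "cheb_xk n k < 1" "1 - (cheb_xk n k)\<^sup>2 = (real k)\<^sup>2 / (real n)\<^sup>2"
    "(real n)\<^sup>2 * (1 - (cheb_xk n k)\<^sup>2) = (real k)\<^sup>2"
    using k_less_n by (simp_all add: cheb_xk_def)
qed

lemma cheb_Q_pos:
  assumes "0 \<le> t" "t \<le> cheb_xk n k"
  shows "0 < cheb_Q n k t"
proof -
  have "t\<^sup>2 \<le> (cheb_xk n k)\<^sup>2"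
    using assms by (simp add: power_mono)
  then have "(real n)\<^sup>2 * t\<^sup>2 \<le> (real n)\<^sup>2 * (cheb_xk n k)\<^sup>2"
    by (simp add: mult_left_mono)
  then have "(real k)\<^sup>2 \<le> (real n)\<^sup>2 * (1 - t\<^sup>2)"
    using cheb_xk(4) by (simp add: right_diff_distrib)
  moreover have "real k * (real k - 1) < (real k)\<^sup>2"
    using k_ge_1 by (simp add: power2_eq_square algebra_simps)
  ultimately show ?thesis
    by (simp add: cheb_Q_def)
qed

lemma cheb_xk_le_imp_less:
  assumes "cheb_xk n k \<le> x"
  shows "(real n)\<^sup>2 * (1 - x\<^sup>2) < real k * (real k + 1)"
proof -
  have "(cheb_xk n k)\<^sup>2 \<le> x\<^sup>2"
    using assms cheb_xk(1) by (simp add: power_mono)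
  then have "(real n)\<^sup>2 * (cheb_xk n k)\<^sup>2 \<le> (real n)\<^sup>2 * x\<^sup>2"
    by (simp add: mult_left_mono)
  then have "(real n)\<^sup>2 * (1 - x\<^sup>2) \<le> (real k)\<^sup>2"
    using cheb_xk(4) by (simp add: right_diff_distrib)
  also have "\<dots> < real k * (real k + 1)"
    using k_ge_1 by (simp add: power2_eq_square algebra_simps)
  finally show ?thesis .
qed

lemma cheb_omega_less_xk: "cheb_omega n k < cheb_xk n k"
proof (rule ccontr)
  assume "\<not> ?thesis"
  then have "real k * cheb_omega n k * dT n (Suc k) (cheb_omega n k)
      < ((real n)\<^sup>2 - (real k)\<^sup>2) * dT n k (cheb_omega n k)"
  proof (intro cheb_T_deriv_comb_neg[OF k_ge_1 cheb_omega_nonneg cheb_omega_less_1] conjI)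
    fix x assume "cheb_omega n k < x"
    then show "0 < dT n (Suc k) x" "(real n)\<^sup>2 * (1 - x\<^sup>2) < real k * (real k + 1)"
      using cheb_T_deriv_pos_gt_omega \<open>\<not> cheb_omega n k < cheb_xk n k\<close>
      by (simp_all add: cheb_xk_le_imp_less)
  qed
  then have "0 < ((real n)\<^sup>2 - (real k)\<^sup>2) * dT n k (cheb_omega n k)"
    using cheb_omega_root by simp
  with cheb_T_deriv_omega_nonpos cheb_sq_diff_pos show False
    by (simp add: zero_less_mult_iff)
qed

lemma cheb_T_deriv_comb_neg_xk:
  "real k * cheb_xk n k * dT n (Suc k) (cheb_xk n k)
     < ((real n)\<^sup>2 - (real k)\<^sup>2) * dT n k (cheb_xk n k)"
proof (intro cheb_T_deriv_comb_neg[OF k_ge_1] conjI)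
  show "0 \<le> cheb_xk n k" "cheb_xk n k < 1"
    using cheb_xk(1,2) by simp_all
  fix x assume "cheb_xk n k < x"
  then show "0 < dT n (Suc k) x" "(real n)\<^sup>2 * (1 - x\<^sup>2) < real k * (real k + 1)"
    using cheb_T_deriv_pos_gt_omega[of x] cheb_omega_less_xk cheb_xk_le_imp_less[of x] by simp_all
qed

lemma cheb_T_deriv_pos_xk: "0 < dT n (Suc k) (cheb_xk n k)" "0 < dT n k (cheb_xk n k)"
proof -
  show "0 < dT n (Suc k) (cheb_xk n k)"
    using cheb_T_deriv_pos_gt_omega cheb_omega_less_xk by simp
  then have "0 < real k * cheb_xk n k * dT n (Suc k) (cheb_xk n k)"
    using cheb_xk(1) k_ge_1 by simp
  then have "0 < ((real n)\<^sup>2 - (real k)\<^sup>2) * dT n k (cheb_xk n k)"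
    using cheb_T_deriv_comb_neg_xk by linarith
  then show "0 < dT n k (cheb_xk n k)"
    using cheb_sq_diff_pos by (simp add: zero_less_mult_iff)
qed

lemma cheb_E_xk_less:
  "cheb_E n k (cheb_xk n k) < cheb_weight n k (1 - (cheb_xk n k)\<^sup>2) * (dT n k (cheb_xk n k))\<^sup>2"
proof -
  let ?x = "cheb_xk n k"
  let ?u = "dT n k ?x"
  let ?v = "dT n (Suc k) ?x"
  have lam: "(real n)\<^sup>2 - (real k)\<^sup>2 = (real n)\<^sup>2 * ?x\<^sup>2"
    using cheb_xk(4) by (simp add: algebra_simps)
  have "real k * ?x * ?v < (real n)\<^sup>2 * ?x\<^sup>2 * ?u"
    using cheb_T_deriv_comb_neg_xk unfolding lam .
  then have "real k * (real k * ?x * ?v) < real k * ((real n)\<^sup>2 * ?x\<^sup>2 * ?u)"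
    using k_ge_1 by simp
  then have "?x * ((real k)\<^sup>2 * ?v) < ?x * ((real n)\<^sup>2 * (real k * ?x * ?u))"
    by (simp add: power2_eq_square algebra_simps)
  then have "(real k)\<^sup>2 * ?v < (real n)\<^sup>2 * (real k * ?x * ?u)"
    using cheb_xk(1) by simp
  then have "0 < cheb_W n k ?x"
    using k_less_n by (simp add: cheb_W_def cheb_xk(3) field_simps)
  moreover have "cheb_W n k ?x < real k * ?x * ?u"
    using cheb_T_deriv_pos_xk(1) cheb_xk(1,2) by (simp add: cheb_W_def abs_square_less_1)
  ultimately have "(cheb_W n k ?x)\<^sup>2 - (real k * ?x * ?u)\<^sup>2 < 0"
    by (simp add: power_strict_mono)
  moreover have "0 < (1 - ?x\<^sup>2) ^ k" "0 < cheb_Q n k ?x"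
    using cheb_xk(1,2) by (simp_all add: abs_square_less_1 cheb_Q_pos)
  ultimately have "(1 - ?x\<^sup>2) ^ k * ((cheb_W n k ?x)\<^sup>2 - (real k * ?x * ?u)\<^sup>2) / cheb_Q n k ?x < 0"
    by (simp add: mult_pos_neg divide_neg_pos)
  then show ?thesis
    by (simp add: cheb_E_eq)
qed

lemma cheb_T_deriv_omega_less_xk: "\<bar>dT n k (cheb_omega n k)\<bar> < dT n k (cheb_xk n k)"
proof -
  let ?w = "cheb_omega n k"
  let ?x = "cheb_xk n k"
  have "?w\<^sup>2 \<le> ?x\<^sup>2"
    using cheb_omega_nonneg cheb_omega_less_xk by (simp add: power_mono)
  with cheb_xk(3) have P: "(real k)\<^sup>2 / (real n)\<^sup>2 \<le> 1 - ?w\<^sup>2" "1 - ?w\<^sup>2 \<le> 1"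
    by (linarith, simp)
  have "k < n"
    using k_less_n by simp
  have weight_le: "cheb_weight n k (1 - ?x\<^sup>2) \<le> cheb_weight n k (1 - ?w\<^sup>2)"
    using cheb_weight_mono[OF k_ge_1 \<open>k < n\<close> P] unfolding cheb_xk(3) .
  have "cheb_weight n k (1 - ?w\<^sup>2) * (dT n k ?w)\<^sup>2 = cheb_E n k ?w"
    using cheb_omega_root by (simp add: cheb_E_eq cheb_W_def)
  also have "\<dots> \<le> cheb_E n k ?x"
    using cheb_omega_nonneg cheb_omega_less_xk cheb_Q_pos
    by (intro cheb_E_mono[OF k_ge_1]) simp_all
  also have "\<dots> < cheb_weight n k (1 - ?x\<^sup>2) * (dT n k ?x)\<^sup>2"
    by (rule cheb_E_xk_less)
  also have "\<dots> \<le> cheb_weight n k (1 - ?w\<^sup>2) * (dT n k ?x)\<^sup>2"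
    using weight_le by (simp add: mult_right_mono)
  finally have "\<bar>dT n k ?w\<bar>\<^sup>2 < (dT n k ?x)\<^sup>2"
    using cheb_weight_pos[OF k_ge_1 \<open>k < n\<close> P] mult_less_cancel_left_pos by simp
  then show ?thesis
    using power2_less_imp_less cheb_T_deriv_pos_xk(2) less_imp_le by blast
qed

end

end

lemma abs_le_DS_majorant: "\<bar>dT n k x\<bar> \<le> DS_majorant n k x"
proof -
  have "(dT n k x)\<^sup>2 \<le> (dT n k x)\<^sup>2 + ((deriv ^^ k) (cheb_S n) x)\<^sup>2"
    by simp
  then show ?thesis
    unfolding DS_majorant_def by (metis real_sqrt_abs real_sqrt_le_mono)
qed

theorem proposition4p1:
  fixes n k :: nat
  assumes "k \<ge> 1" and "n \<ge> k + 2"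
  shows "cheb_tau n k <
           DS_majorant n k (sqrt (1 - (real k)\<^sup>2 / (real n)\<^sup>2)) / poly (cheb_T_deriv n k) 1"
proof -
  have "Suc k < n"
    using assms by simp
  have "\<bar>dT n k (cheb_omega n k)\<bar> < DS_majorant n k (cheb_xk n k)"
    using cheb_T_deriv_omega_less_xk[OF \<open>Suc k < n\<close> assms(1)] abs_le_DS_majorant
    by (rule order_less_le_trans[OF _ order_trans[OF abs_ge_self]])
  moreover have "0 < dT n k 1"
    using cheb_T_deriv_one_pos[of k n] assms by simp
  ultimately show ?thesis
    by (simp add: cheb_tau_def cheb_xk_def divide_strict_right_mono)
qed

end
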